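(* Let $H$ and $H'$ be periodic generalized Jacobi matrices whose $m$-functions coincide (in a neighborhood of infinity). Then $H=H'$; i.e. the $m$-function of a periodic generalized Jacobi matrix determines it uniquely.
   Context: For a real monic polynomial $p(\lambda)=\lambda^n+p_{n-1}\lambda^{n-1}+\dots+p_0$, its companion matrix is the $n\times n$ matrix $C_p$ with ones on the subdiagonal, last column $(-p_0,\dots,-p_{n-1})^\top$, zeros elsewhere; its symmetrizator is the Hankel matrix $E_p$ with $(i,k)$ entry $p_{i+k-1}$ if $i+k-1\le n$ ($p_n=1$) and $0$ otherwise. Given real monic polynomials $p_j$ of degree $k_j\ge1$, signs $\varepsilon_j\in\{\pm1\}$ and $b_j>0$ ($j\in\mathbb{Z}_+$), the generalized Jacobi matrix $H$ is the semi-infinite block tridiagonal matrix with diagonal blocks $C_{p_j}$, subdiagonal blocks $B_j$ ($k_{j+1}\times k_j$) with only nonzero entry $b_j$ at position $(1,k_j)$, and superdiagonal blocks $\widetilde B_j$ ($k_j\times k_{j+1}$) with only nonzero entry $\varepsilon_j\varepsilon_{j+1}b_j$ at position $(1,k_{j+1})$. It is periodic ($s$-periodic for some $s\in\mathbb{N}$) if $p_{j+s}=p_j$, $b_{j+s}=b_j$, $\varepsilon_{j+s}=\varepsilon_j$ for all $j$. With $G=\mathrm{diag}(\varepsilon_0E_{p_0}^{-1},\varepsilon_1E_{p_1}^{-1},\dots)$ and $[x,y]=(Gx,y)_{\ell^2}$, the $m$-function of $H$ is $m(\lambda)=[(H-\lambda)^{-1}e,e]$, $e=(1,0,0,\dots)^\top$,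 for $|\lambda|>\|H\|$. *)

theory Defs
  imports Complex_Main "HOL-Computational_Algebra.Polynomial"
begin

text \<open>Block offsets: block j occupies rows/columns off p j, ..., off p (j+1) - 1,
  where the size of block j is k_j = degree (p j).  All indices are 0-based.\<close>

definition blk_off :: "(nat \<Rightarrow> real poly) \<Rightarrow> nat \<Rightarrow> nat" where
  "blk_off p j = (\<Sum>i<j. degree (p i))"

definition blk_idx :: "(nat \<Rightarrow> real poly) \<Rightarrow> nat \<Rightarrow> nat" where
  "blk_idx p n = (LEAST j. n < blk_off p (Suc j))"

definition blk_loc :: "(nat \<Rightarrow> real poly) \<Rightarrow> nat \<Rightarrow> nat" where
  "blk_loc p n = n - blk_off p (blk_idx p n)"

text \<open>Entries of the generalized Jacobi matrix H: diagonal blocks are companion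
  matrices C_{p_j}; subdiagonal block B_j has b_j at (1,k_j); superdiagonal block
  B~_j has eps_j eps_{j+1} b_j at (1,k_{j+1}) (1-based positions).\<close>

definition gjm :: "(nat \<Rightarrow> real poly) \<Rightarrow> (nat \<Rightarrow> real) \<Rightarrow> (nat \<Rightarrow> real) \<Rightarrow> nat \<Rightarrow> nat \<Rightarrow> real" where
  "gjm p eps b r c =
    (let j = blk_idx p r; l = blk_idx p c; a = blk_loc p r; d = blk_loc p c;
         k = degree (p l) in
     if l = j then (if a = Suc d then 1 else 0) - (if d = k - 1 then coeff (p j) a else 0)
     else if l = Suc j then (if a = 0 \<and> d = k - 1 then eps j * eps (Suc j) * b j else 0)
     else if j = Suc l then (if a = 0 \<and> d = k - 1 then b l else 0)
     else 0)"

text \<open>Symmetrizator E_p (Hankel, (i,k) entry p_{i+k-1}, 1-based; p_n = 1, zero beyond)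
  and its inverse (on the k x k block).\<close>

definition symm :: "real poly \<Rightarrow> nat \<Rightarrow> nat \<Rightarrow> real" where
  "symm q a d = coeff q (a + d + 1)"

definition symm_inv :: "real poly \<Rightarrow> nat \<Rightarrow> nat \<Rightarrow> real" where
  "symm_inv q = (SOME F. \<forall>a<degree q. \<forall>d<degree q.
      (\<Sum>c<degree q. symm q a c * F c d) = (if a = d then 1 else 0))"

definition Gmat :: "(nat \<Rightarrow> real poly) \<Rightarrow> (nat \<Rightarrow> real) \<Rightarrow> nat \<Rightarrow> nat \<Rightarrow> real" where
  "Gmat p eps r c =
    (if blk_idx p r = blk_idx p c
     then eps (blk_idx p r) * symm_inv (p (blk_idx p r)) (blk_loc p r) (blk_loc p c)
     else 0)"

definition l2 :: "(nat \<Rightarrow> complex) \<Rightarrow> bool" where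
  "l2 x \<longleftrightarrow> summable (\<lambda>n. (cmod (x n))\<^sup>2)"

definition l2norm :: "(nat \<Rightarrow> complex) \<Rightarrow> real" where
  "l2norm x = sqrt (\<Sum>n. (cmod (x n))\<^sup>2)"

definition mat_app :: "(nat \<Rightarrow> nat \<Rightarrow> real) \<Rightarrow> (nat \<Rightarrow> complex) \<Rightarrow> nat \<Rightarrow> complex" where
  "mat_app A x r = (\<Sum>c. complex_of_real (A r c) * x c)"

definition op_norm :: "(nat \<Rightarrow> nat \<Rightarrow> real) \<Rightarrow> real" where
  "op_norm A = Sup {l2norm (mat_app A x) | x. l2 x \<and> l2norm x \<le> 1}"

definition e0 :: "nat \<Rightarrow> complex" where
  "e0 n = (if n = 0 then 1 else 0)"

definition resolvent_e :: "(nat \<Rightarrow> nat \<Rightarrow> real) \<Rightarrow> complex \<Rightarrow> nat \<Rightarrow> complex" where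
  "resolvent_e A z = (THE x. l2 x \<and> (\<forall>r. mat_app A x r - z * x r = e0 r))"

definition indef_ip :: "(nat \<Rightarrow> nat \<Rightarrow> real) \<Rightarrow> (nat \<Rightarrow> complex) \<Rightarrow> (nat \<Rightarrow> complex) \<Rightarrow> complex" where
  "indef_ip G x y = (\<Sum>n. mat_app G x n * cnj (y n))"

definition mfun :: "(nat \<Rightarrow> real poly) \<Rightarrow> (nat \<Rightarrow> real) \<Rightarrow> (nat \<Rightarrow> real) \<Rightarrow> complex \<Rightarrow> complex" where
  "mfun p eps b z = indef_ip (Gmat p eps) (resolvent_e (gjm p eps b) z) e0"

definition gj_data :: "(nat \<Rightarrow> real poly) \<Rightarrow> (nat \<Rightarrow> real) \<Rightarrow> (nat \<Rightarrow> real) \<Rightarrow> bool" where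
  "gj_data p eps b \<longleftrightarrow> (\<forall>j. lead_coeff (p j) = 1 \<and> degree (p j) \<ge> 1 \<and>
      (eps j = 1 \<or> eps j = -1) \<and> b j > 0)"

definition gj_periodic :: "(nat \<Rightarrow> real poly) \<Rightarrow> (nat \<Rightarrow> real) \<Rightarrow> (nat \<Rightarrow> real) \<Rightarrow> bool" where
  "gj_periodic p eps b \<longleftrightarrow> (\<exists>s>0. \<forall>j. p (j + s) = p j \<and> b (j + s) = b j \<and> eps (j + s) = eps j)"

end

theory Submission
  imports Defs "HOL-Computational_Algebra.Fundamental_Theorem_Algebra"
begin

text \<open>A periodic generalized Jacobi matrix \<open>H\<close> is a bounded band matrix. For the tails
  \<open>H\<^sub>j\<close> (the first \<open>j\<close> blocks cut off) the columns \<open>(H\<^sub>j - z)\<inverse> e\<close> are therefore given near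
  infinity by Neumann series; they are \<open>O(1/z)\<close> and unique among bounded solutions. Let
  \<open>\<mu>\<^sub>j(z)\<close> be the last entry in block \<open>j\<close> of this column. Beyond block \<open>j\<close> the column is a
  multiple of the next one, and solving the rows of block \<open>j\<close> yields the continued fraction
  \<open>\<mu>\<^sub>j = -1 / (p\<^sub>j(z) + \<epsilon>\<^sub>j \<epsilon>\<^sub>j\<^sub>+\<^sub>1 b\<^sub>j\<^sup>2 \<mu>\<^sub>j\<^sub>+\<^sub>1)\<close>, while \<open>m = \<epsilon>\<^sub>0 \<mu>\<^sub>0\<close>.
  If two such matrices have the same \<open>m\<close>, then \<open>\<mu>'\<^sub>0\<close> is a multiple of \<open>\<mu>\<^sub>0\<close>, and the recursion
  makes \<open>p\<^sub>j - p'\<^sub>j = O(1/z)\<close>, hence \<open>p\<^sub>j = p'\<^sub>j\<close>, and propagates the proportionality to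
  \<open>j + 1\<close>; comparing successive factors identifies \<open>\<epsilon>\<^sub>j \<epsilon>\<^sub>j\<^sub>+\<^sub>1 b\<^sub>j\<^sup>2\<close>. These weights determine
  \<open>b\<^sub>j > 0\<close> and \<open>\<epsilon>\<^sub>j \<epsilon>\<^sub>j\<^sub>+\<^sub>1\<close>, which is all \<open>H\<close> depends on.\<close>

section \<open>Continued fractions with decaying solutions\<close>

lemma poly_eq_0_if_norm_le_inverse:
  fixes q :: "complex poly"
  assumes bound: "\<And>z. cmod z \<ge> R \<Longrightarrow> cmod (poly q z) \<le> C / cmod z"
  shows "q = 0"
proof (rule ccontr)
  assume "q \<noteq> 0"
  then obtain r where r: "\<And>z. r \<le> cmod z \<Longrightarrow> \<bar>C\<bar> + 1 \<le> cmod (poly (pCons 0 q) z)"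
    using poly_infinity[of q "\<bar>C\<bar> + 1" 0] by blast
  define t where "t = max 1 (max r R)"
  have t: "t \<ge> 1" "cmod (complex_of_real t) = t" by (auto simp: t_def)
  have "\<bar>C\<bar> + 1 \<le> cmod (poly (pCons 0 q) (complex_of_real t))"
    using r t by (simp add: t_def)
  also have "\<dots> = t * cmod (poly q (complex_of_real t))"
    using t by (simp add: norm_mult)
  also have "\<dots> \<le> t * (C / t)"
    using bound[of "complex_of_real t"] t by (intro mult_left_mono) (auto simp: t_def)
  also have "\<dots> = C" using t by simp
  finally show False by linarith
qed

lemma map_poly_of_real_inject:
  "map_poly (of_real :: real \<Rightarrow> 'a::{real_algebra_1}) p = map_poly of_real q \<Longrightarrow> p = q"
  by (metis coeff_map_poly of_real_0 of_real_eq_iff poly_eqI)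

locale cfrac_pair =
  fixes P P' :: "nat \<Rightarrow> real poly" and \<alpha> \<alpha>' :: "nat \<Rightarrow> real"
    and \<mu> \<mu>' :: "nat \<Rightarrow> complex \<Rightarrow> complex" and R0 :: real
  assumes monic: "\<And>j. lead_coeff (P j) = 1" "\<And>j. lead_coeff (P' j) = 1"
    and weight_nz: "\<And>j. \<alpha> j \<noteq> 0" "\<And>j. \<alpha>' j \<noteq> 0"
    and rec: "\<And>j z. cmod z \<ge> R0 \<Longrightarrow>
       1 = - \<mu> j z * (poly (map_poly of_real (P j)) z + of_real (\<alpha> j) * \<mu> (Suc j) z)"
    and rec': "\<And>j z. cmod z \<ge> R0 \<Longrightarrow>
       1 = - \<mu>' j z * (poly (map_poly of_real (P' j)) z + of_real (\<alpha>' j) * \<mu>' (Suc j) z)"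
    and decay: "\<And>j z. cmod z \<ge> R0 \<Longrightarrow> cmod (\<mu> j z) \<le> 2 / cmod z"
    and decay': "\<And>j z. cmod z \<ge> R0 \<Longrightarrow> cmod (\<mu>' j z) \<le> 2 / cmod z"
begin

lemma denominators_scaled:
  assumes z: "cmod z \<ge> R0" and scaled: "\<mu>' j z = \<kappa> * \<mu> j z"
  shows "poly (map_poly of_real (P j)) z + of_real (\<alpha> j) * \<mu> (Suc j) z =
     \<kappa> * (poly (map_poly of_real (P' j)) z + of_real (\<alpha>' j) * \<mu>' (Suc j) z)"
proof -
  have "\<mu> j z * (poly (map_poly of_real (P j)) z + of_real (\<alpha> j) * \<mu> (Suc j) z) = -1"
    using rec[OF z, of j] by (simp add: minus_equation_iff)
  moreover have "\<mu> j z * (\<kappa> * (poly (map_poly of_real (P' j)) z + of_real (\<alpha>' j) * \<mu>' (Suc j) z)) = -1"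
    using rec'[OF z, of j] scaled by (simp add: minus_equation_iff mult.assoc mult.left_commute)
  ultimately show ?thesis by (metis mult_cancel_left mult_zero_left zero_neq_neg_one)
qed

text \<open>If \<open>\<mu>'\<^sub>j = \<kappa> \<mu>\<^sub>j\<close> near infinity, then comparing the recursions gives
  \<open>P\<^sub>j - \<kappa> P'\<^sub>j = O(1/z)\<close>, so this polynomial vanishes; monicity forces \<open>\<kappa> = 1\<close>.\<close>

lemma scaled_step:
  assumes \<kappa>: "\<kappa> \<noteq> 0" and scaled: "\<And>z. cmod z \<ge> R \<Longrightarrow> \<mu>' j z = \<kappa> * \<mu> j z"
  shows "\<kappa> = 1" "P j = P' j"
    "\<And>z. cmod z \<ge> max R R0 \<Longrightarrow> \<mu>' (Suc j) z = of_real (\<alpha> j / \<alpha>' j) * \<mu> (Suc j) z"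
proof -
  let ?q = "map_poly complex_of_real (P j) - smult \<kappa> (map_poly of_real (P' j))"
  let ?C = "cmod \<kappa> * \<bar>\<alpha>' j\<bar> * 2 + \<bar>\<alpha> j\<bar> * 2"
  have denom: "poly (map_poly of_real (P j)) z + of_real (\<alpha> j) * \<mu> (Suc j) z =
     \<kappa> * (poly (map_poly of_real (P' j)) z + of_real (\<alpha>' j) * \<mu>' (Suc j) z)"
    if "cmod z \<ge> max R R0" for z
    using that by (intro denominators_scaled scaled) auto
  have "cmod (poly ?q z) \<le> ?C / cmod z" if z: "cmod z \<ge> max R R0" for z
  proof -
    have "poly ?q z = \<kappa> * of_real (\<alpha>' j) * \<mu>' (Suc j) z - of_real (\<alpha> j) * \<mu> (Suc j) z"
      using denom[OF z] by (simp add: algebra_simps)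
    hence "cmod (poly ?q z) \<le> cmod (\<kappa> * of_real (\<alpha>' j) * \<mu>' (Suc j) z) + cmod (of_real (\<alpha> j) * \<mu> (Suc j) z)"
      using norm_triangle_ineq4 by simp
    also have "\<dots> = cmod \<kappa> * \<bar>\<alpha>' j\<bar> * cmod (\<mu>' (Suc j) z) + \<bar>\<alpha> j\<bar> * cmod (\<mu> (Suc j) z)"
      by (simp add: norm_mult)
    also have "\<dots> \<le> cmod \<kappa> * \<bar>\<alpha>' j\<bar> * (2 / cmod z) + \<bar>\<alpha> j\<bar> * (2 / cmod z)"
      using decay[of z "Suc j"] decay'[of z "Suc j"] z by (intro add_mono mult_left_mono) auto
    finally show ?thesis by (simp add: add_divide_distrib)
  qed
  hence eq: "map_poly complex_of_real (P j) = smult \<kappa> (map_poly of_real (P' j))"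
    using poly_eq_0_if_norm_le_inverse by (metis eq_iff_diff_eq_0)
  have "lead_coeff (map_poly complex_of_real (P j)) = 1"
    using monic(1)[of j] by (subst lead_coeff_map_poly_nz) auto
  moreover have "lead_coeff (smult \<kappa> (map_poly complex_of_real (P' j))) = \<kappa>"
    using monic(2)[of j] \<kappa> by (subst lead_coeff_smult, subst lead_coeff_map_poly_nz) auto
  ultimately show one: "\<kappa> = 1" using eq by simp
  show P: "P j = P' j" using eq one by (intro map_poly_of_real_inject) simp
  fix z assume z: "cmod z \<ge> max R R0"
  have "of_real (\<alpha> j) * \<mu> (Suc j) z = of_real (\<alpha>' j) * \<mu>' (Suc j) z"
    using denom[OF z] one P by simp
  then show "\<mu>' (Suc j) z = of_real (\<alpha> j / \<alpha>' j) * \<mu> (Suc j) z"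
    using weight_nz(2)[of j] by (simp add: field_simps)
qed

lemma scaled_everywhere:
  assumes "\<kappa> \<noteq> 0" "\<And>z. cmod z \<ge> R \<Longrightarrow> \<mu>' 0 z = \<kappa> * \<mu> 0 z"
  shows "\<exists>\<kappa> R. \<kappa> \<noteq> 0 \<and> (\<forall>z. cmod z \<ge> R \<longrightarrow> \<mu>' j z = \<kappa> * \<mu> j z)"
proof (induction j)
  case 0 then show ?case using assms by blast
next
  case (Suc j)
  then obtain \<kappa> R where "\<kappa> \<noteq> 0" "\<And>z. cmod z \<ge> R \<Longrightarrow> \<mu>' j z = \<kappa> * \<mu> j z" by blast
  from scaled_step(3)[OF this] show ?case
    using weight_nz by (intro exI[of _ "of_real (\<alpha> j / \<alpha>' j)"] exI[of _ "max R R0"]) auto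
qed

theorem coeffs_eq_if_scaled:
  assumes "\<kappa> \<noteq> 0" "\<And>z. cmod z \<ge> R \<Longrightarrow> \<mu>' 0 z = \<kappa> * \<mu> 0 z"
  shows "P j = P' j" "\<alpha> j = \<alpha>' j"
proof -
  obtain \<kappa> R where "\<kappa> \<noteq> 0" "\<And>z. cmod z \<ge> R \<Longrightarrow> \<mu>' j z = \<kappa> * \<mu> j z"
    using scaled_everywhere[OF assms] by blast
  note step = scaled_step[OF this]
  show "P j = P' j" by (rule step(2))
  have "complex_of_real (\<alpha> j / \<alpha>' j) \<noteq> 0" using weight_nz by simp
  from this step(3) have "complex_of_real (\<alpha> j / \<alpha>' j) = 1" by (rule scaled_step(1))
  then show "\<alpha> j = \<alpha>' j"
    using weight_nz(2)[of j] by (simp add: divide_eq_1_iff)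
qed

end

section \<open>Resolvents of bounded band matrices\<close>

lemma mat_app_sparse_row:
  assumes "\<And>c. A r c = (if c = c1 then a1 else 0) + (if c = c2 then a2 else 0) + (if c = c3 then a3 else 0)"
  shows "mat_app A x r = of_real a1 * x c1 + of_real a2 * x c2 + of_real a3 * x c3"
proof -
  have "(\<lambda>c. complex_of_real (A r c) * x c) =
     (\<lambda>c. ((if c = c1 then of_real a1 * x c1 else 0) + (if c = c2 then of_real a2 * x c2 else 0))
          + (if c = c3 then of_real a3 * x c3 else 0))"
    by (rule ext) (simp add: assms distrib_right)
  then have "(\<lambda>c. complex_of_real (A r c) * x c) sums (of_real a1 * x c1 + of_real a2 * x c2 + of_real a3 * x c3)"
    by (simp only:) (intro sums_add sums_single)
  then show ?thesis unfolding mat_app_def by (rule sums_unique[symmetric])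
qed

lemma l2_norm_le:
  assumes "l2 x" shows "cmod (x r) \<le> sqrt (\<Sum>n. (cmod (x n))\<^sup>2)"
proof -
  have "(\<Sum>n\<in>{r}. (cmod (x n))\<^sup>2) \<le> (\<Sum>n. (cmod (x n))\<^sup>2)"
    using assms unfolding l2_def by (intro sum_le_suminf) auto
  then show ?thesis by (simp add: real_le_rsqrt)
qed

locale banded =
  fixes A :: "nat \<Rightarrow> nat \<Rightarrow> real" and W :: nat and B :: real
  assumes band: "\<And>r c. r + W < c \<or> c + W < r \<Longrightarrow> A r c = 0"
    and entry_bound: "\<And>r c. \<bar>A r c\<bar> \<le> B"
begin

definition M :: real where "M = real (2 * W + 1) * max B 0 + 1"

definition radius :: real where "radius = 2 ^ Suc W * M"

lemma M_ge_1: "M \<ge> 1" by (simp add: M_def)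

lemma radius_ge: "radius \<ge> 2 * M"
proof -
  have "(2::real) \<le> 2 ^ Suc W" using one_le_power[of "2::real" W] by simp
  thus ?thesis unfolding radius_def using M_ge_1 by (intro mult_right_mono) auto
qed

lemma radius_pos: "radius > 0" using radius_ge M_ge_1 by linarith

definition win :: "nat \<Rightarrow> nat set" where "win r = {r - W .. r + W}"

lemma entry_outside_win: "c \<notin> win r \<Longrightarrow> A r c = 0"
  by (rule band) (auto simp: win_def)

lemma mat_app_win: "mat_app A x r = (\<Sum>c\<in>win r. complex_of_real (A r c) * x c)"
  unfolding mat_app_def by (rule suminf_finite) (auto simp: win_def entry_outside_win)

lemma summable_row: "summable (\<lambda>c. complex_of_real (A r c) * x c)"
  by (rule summable_finite[of "win r"]) (auto simp: win_def entry_outside_win)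

lemma mat_app_diff: "mat_app A (\<lambda>c. x c - y c) r = mat_app A x r - mat_app A y r"
  by (simp add: mat_app_win right_diff_distrib sum_subtractf)

lemma mat_app_scale: "mat_app A (\<lambda>c. k * x c) r = k * mat_app A x r"
  by (simp add: mat_app_win sum_distrib_left mult.left_commute)

lemma norm_mat_app_le:
  assumes x: "\<And>c. cmod (x c) \<le> S"
  shows "cmod (mat_app A x r) \<le> M * S"
proof -
  have S: "S \<ge> 0" using x[of 0] norm_ge_zero by (meson order_trans)
  have "cmod (mat_app A x r) \<le> (\<Sum>c\<in>win r. cmod (complex_of_real (A r c) * x c))"
    unfolding mat_app_win by (rule norm_sum)
  also have "\<dots> \<le> (\<Sum>c\<in>win r. max B 0 * S)"
    using x S by (intro sum_mono) (auto simp: norm_mult intro!: mult_mono order_trans[OF entry_bound])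
  also have "\<dots> = real (card (win r)) * (max B 0 * S)" by simp
  also have "\<dots> \<le> real (2 * W + 1) * (max B 0 * S)"
    using S by (intro mult_right_mono) (auto simp: win_def)
  also have "\<dots> \<le> M * S" using S by (simp add: M_def algebra_simps)
  finally show ?thesis .
qed

text \<open>Iterating \<open>sup |d| \<le> (M / |z|) sup |d|\<close> drives any bound on \<open>d\<close> to zero.\<close>

lemma bounded_eigenvector_eq_0:
  assumes z: "cmod z > M" and bound: "\<And>r. cmod (d r) \<le> S"
    and eigen: "\<And>r. mat_app A d r = z * d r"
  shows "d r = 0"
proof -
  have zpos: "cmod z > 0" using z M_ge_1 by linarith
  have iter: "cmod (d r) \<le> S * (M / cmod z) ^ n" for n r
  proof (induction n arbitrary: r)
    case 0 then show ?case using bound by simp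
  next
    case (Suc n)
    have "cmod z * cmod (d r) = cmod (mat_app A d r)" by (simp add: eigen norm_mult)
    also have "\<dots> \<le> M * (S * (M / cmod z) ^ n)" by (rule norm_mat_app_le[OF Suc.IH])
    finally show ?case using zpos by (simp add: field_simps)
  qed
  have "(\<lambda>n. S * (M / cmod z) ^ n) \<longlonglongrightarrow> 0"
    using z M_ge_1 zpos by (intro tendsto_mult_right_zero LIMSEQ_power_zero) auto
  then have "cmod (d r) \<le> 0"
    using iter by (intro tendsto_le[OF trivial_limit_sequentially _ tendsto_const]) auto
  then show ?thesis by simp
qed

lemma bounded_solution_unique:
  assumes z: "cmod z > M" and "\<And>r. cmod (y r) \<le> S" and "\<And>r. cmod (y' r) \<le> S'"
    and y: "\<And>r. mat_app A y r - z * y r = f r" and y': "\<And>r. mat_app A y' r - z * y' r = f r"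
  shows "y = y'"
proof
  fix r
  have "y r - y' r = 0"
  proof (rule bounded_eigenvector_eq_0[OF z])
    show "cmod (y r - y' r) \<le> S + S'" for r
      using assms(2,3)[of r] norm_triangle_ineq4[of "y r" "y' r"] by linarith
    show "mat_app A (\<lambda>r. y r - y' r) r = z * (y r - y' r)" for r
      using y[of r] y'[of r] by (simp add: mat_app_diff algebra_simps)
  qed
  then show "y r = y' r" by simp
qed

primrec power_col :: "nat \<Rightarrow> nat \<Rightarrow> nat \<Rightarrow> complex" where
  "power_col t 0 = (\<lambda>r. if r = t then 1 else 0)"
| "power_col t (Suc n) = mat_app A (power_col t n)"

lemma norm_power_col_le: "cmod (power_col t n r) \<le> M ^ n"
proof (induction n arbitrary: r)
  case (Suc n)
  then show ?case using norm_mat_app_le[of "power_col t n" "M ^ n"] by simp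
qed simp

lemma power_col_support: "power_col t n r \<noteq> 0 \<Longrightarrow> r \<le> t + n * W"
proof (induction n arbitrary: r)
  case (Suc n)
  then obtain c where c: "c \<in> win r" "power_col t n c \<noteq> 0"
    by (metis (no_types, lifting) mat_app_win mult_zero_right power_col.simps(2) sum.neutral)
  then show ?case using Suc.IH by (force simp: win_def)
qed (simp split: if_splits)

text \<open>The Neumann series \<open>-\<Sum>\<^sub>n A\<^sup>n e\<^sub>t / z\<^sup>n\<^sup>+\<^sup>1\<close> for \<open>(A - z)\<inverse> e\<^sub>t\<close>.\<close>

definition neumann_col :: "nat \<Rightarrow> complex \<Rightarrow> nat \<Rightarrow> complex" where
  "neumann_col t z r = - (\<Sum>n. power_col t n r / z ^ Suc n)"

text \<open>The choice of \<open>radius\<close> makes the terms decay geometrically both in \<open>n\<close> and, by the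
  band structure, in the distance \<open>r - t\<close> from the diagonal.\<close>

lemma norm_power_col_div_le:
  assumes z: "cmod z \<ge> radius"
  shows "cmod (power_col t n r / z ^ n) \<le> (1/2) ^ (r - t) * (1/2) ^ n"
proof (cases "power_col t n r = 0")
  case False
  hence "r - t \<le> n * W" using power_col_support by fastforce
  have zpos: "cmod z > 0" using z radius_pos by linarith
  have "M * 2 ^ Suc W \<le> cmod z" using z by (simp add: radius_def mult.commute)
  then have "M / cmod z \<le> (1/2) ^ Suc W"
    using zpos by (simp add: power_one_over divide_le_eq field_simps)
  have "cmod (power_col t n r / z ^ n) \<le> M ^ n / cmod z ^ n"
    using norm_power_col_le zpos by (simp add: norm_divide norm_power divide_right_mono)
  also have "\<dots> = (M / cmod z) ^ n" by (simp add: power_divide)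
  also have "\<dots> \<le> ((1/2) ^ Suc W) ^ n"
    using \<open>M / cmod z \<le> _\<close> M_ge_1 zpos by (intro power_mono) auto
  also have "\<dots> = (1/2) ^ (n * W + n)"
    by (simp only: power_mult[symmetric] mult.commute[of "Suc W"] mult_Suc_right add.commute)
  also have "\<dots> = (1/2) ^ (n * W) * (1/2) ^ n"
    by (rule power_add)
  also have "\<dots> \<le> (1/2) ^ (r - t) * (1/2) ^ n"
    using \<open>r - t \<le> n * W\<close> by (intro mult_right_mono power_decreasing) auto
  finally show ?thesis .
qed simp

lemma summable_power_col_div:
  assumes z: "cmod z \<ge> radius"
  shows "summable (\<lambda>n. power_col t n r / z ^ n)" "summable (\<lambda>n. power_col t n r / z ^ Suc n)"
proof -
  show *: "summable (\<lambda>n. power_col t n r / z ^ n)"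
    by (rule summable_comparison_test[of _ "\<lambda>n. (1/2::real) ^ (r - t) * (1/2) ^ n"])
       (use norm_power_col_div_le[OF z] in \<open>auto intro: summable_mult summable_geometric\<close>)
  have "summable (\<lambda>n. power_col t n r / z ^ n / z)" using summable_divide[OF *] .
  then show "summable (\<lambda>n. power_col t n r / z ^ Suc n)" by (simp add: field_simps)
qed

lemma neumann_col_decay:
  assumes z: "cmod z \<ge> radius"
  shows "cmod (neumann_col t z r) \<le> (1/2) ^ (r - t) * (2 / cmod z)"
proof -
  have zpos: "cmod z > 0" using z radius_pos by linarith
  let ?g = "\<lambda>n. (1/2::real) ^ (r - t) / cmod z * (1/2) ^ n"
  have "cmod (power_col t n r / z ^ Suc n) = cmod (power_col t n r / z ^ n) / cmod z" for n
    by (simp add: norm_divide norm_mult norm_power)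
  then have bound: "cmod (power_col t n r / z ^ Suc n) \<le> ?g n" for n
    using norm_power_col_div_le[OF z, of t n r] zpos by (simp add: divide_right_mono)
  have "(\<lambda>n. (1/2::real) ^ n) sums 2"
    using geometric_sums[of "1/2::real"] by simp
  then have g: "?g sums ((1/2) ^ (r - t) / cmod z * 2)"
    by (rule sums_mult)
  have "cmod (neumann_col t z r) = cmod (\<Sum>n. power_col t n r / z ^ Suc n)"
    by (simp add: neumann_col_def)
  also have "\<dots> \<le> (\<Sum>n. ?g n)"
    by (rule norm_suminf_le[OF bound sums_summable[OF g]])
  also have "\<dots> = (1/2) ^ (r - t) * (2 / cmod z)"
    using sums_unique[OF g] by simp
  finally show ?thesis .
qed

lemma neumann_col_bound:
  assumes "cmod z \<ge> radius"
  shows "cmod (neumann_col t z r) \<le> 2 / cmod z"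
proof -
  have "(1/2::real) ^ (r - t) \<le> 1" by (rule power_le_one) auto
  then have "(1/2) ^ (r - t) * (2 / cmod z) \<le> 2 / cmod z"
    by (intro mult_left_le_one_le) auto
  then show ?thesis using neumann_col_decay[OF assms, of t r] by linarith
qed

lemma neumann_col_solves:
  assumes z: "cmod z \<ge> radius"
  shows "mat_app A (neumann_col t z) r - z * neumann_col t z r = (if r = t then 1 else 0)"
proof -
  note summable = summable_power_col_div[OF z]
  have "z \<noteq> 0" using z radius_pos by auto
  have "complex_of_real (A r c) * neumann_col t z c
      = - (\<Sum>n. complex_of_real (A r c) * (power_col t n c / z ^ Suc n))" for c
    unfolding neumann_col_def by (subst suminf_mult[OF summable(2)]) simp
  then have "mat_app A (neumann_col t z) r
      = - (\<Sum>c\<in>win r. \<Sum>n. complex_of_real (A r c) * (power_col t n c / z ^ Suc n))"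
    unfolding mat_app_win by (simp add: sum_negf)
  also have "\<dots> = - (\<Sum>n. \<Sum>c\<in>win r. complex_of_real (A r c) * (power_col t n c / z ^ Suc n))"
    by (subst suminf_sum) (intro summable_mult summable(2), simp)
  also have "\<dots> = - (\<Sum>n. power_col t (Suc n) r / z ^ Suc n)"
    by (simp add: mat_app_win sum_divide_distrib)
  finally have lhs: "mat_app A (neumann_col t z) r = - (\<Sum>n. power_col t (Suc n) r / z ^ Suc n)" .
  have "z * neumann_col t z r = - (\<Sum>n. z * (power_col t n r / z ^ Suc n))"
    by (simp only: neumann_col_def mult_minus_right suminf_mult[OF summable(2)])
  also have "(\<lambda>n. z * (power_col t n r / z ^ Suc n)) = (\<lambda>n. power_col t n r / z ^ n)"
    using \<open>z \<noteq> 0\<close> by (simp add: fun_eq_iff)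
  also have "(\<Sum>n. power_col t n r / z ^ n) = power_col t 0 r + (\<Sum>n. power_col t (Suc n) r / z ^ Suc n)"
    using suminf_split_head[OF summable(1)] by simp
  finally show ?thesis using lhs by simp
qed

lemma neumann_col_l2:
  assumes z: "cmod z \<ge> radius"
  shows "l2 (neumann_col 0 z)"
  unfolding l2_def
proof (rule summable_comparison_test)
  show "\<exists>N. \<forall>r\<ge>N. norm ((cmod (neumann_col 0 z r))\<^sup>2) \<le> (1/4) ^ r * (2 / cmod z)\<^sup>2"
  proof (intro exI allI impI)
    fix r
    have "(cmod (neumann_col 0 z r))\<^sup>2 \<le> ((1/2) ^ r * (2 / cmod z))\<^sup>2"
      using neumann_col_decay[OF z, of 0 r] by (intro power_mono) auto
    also have "\<dots> = ((1/2) ^ r)\<^sup>2 * (2 / cmod z)\<^sup>2" by (rule power_mult_distrib)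
    also have "((1/2::real) ^ r)\<^sup>2 = (1/4) ^ r"
      by (simp add: power2_eq_square flip: power_mult_distrib)
    finally show "norm ((cmod (neumann_col 0 z r))\<^sup>2) \<le> (1/4) ^ r * (2 / cmod z)\<^sup>2" by simp
  qed
  show "summable (\<lambda>r. (1/4::real) ^ r * (2 / cmod z)\<^sup>2)"
    by (intro summable_mult2 summable_geometric) simp
qed

end

section \<open>Block structure of generalized Jacobi matrices\<close>

lemma abs_if_le: "\<bar>x\<bar> \<le> B \<Longrightarrow> \<bar>y\<bar> \<le> B \<Longrightarrow> \<bar>if P then x else y\<bar> \<le> (B::real)"
  by simp

locale gj_matrix =
  fixes p :: "nat \<Rightarrow> real poly" and eps b :: "nat \<Rightarrow> real"
  assumes data: "gj_data p eps b"
begin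

abbreviation off where "off \<equiv> blk_off p"
abbreviation kk where "kk j \<equiv> degree (p j)"

lemma deg_pos: "kk j \<ge> 1" using data by (simp add: gj_data_def)
lemma monic: "lead_coeff (p j) = 1" using data by (simp add: gj_data_def)
lemma eps_cases: "eps j = 1 \<or> eps j = -1" using data by (simp add: gj_data_def)
lemma b_pos: "b j > 0" using data by (simp add: gj_data_def)

lemma abs_eps: "\<bar>eps j\<bar> = 1" using eps_cases[of j] by auto

lemma off_0 [simp]: "off 0 = 0" by (simp add: blk_off_def)
lemma off_Suc: "off (Suc j) = off j + kk j" by (simp add: blk_off_def)

lemma off_mono: "j \<le> l \<Longrightarrow> off j \<le> off l"
  unfolding blk_off_def by (intro sum_mono2) auto

lemma off_Suc_le: "j < l \<Longrightarrow> off (Suc j) \<le> off l"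
  by (simp add: off_mono)

lemma off_ge: "off j \<ge> j"
proof (induction j)
  case (Suc j) then show ?case using off_Suc[of j] deg_pos[of j] by simp
qed simp

lemma below_block: "d < kk l \<Longrightarrow> l < j \<Longrightarrow> off l + d < off j"
  using off_Suc[of l] off_Suc_le[of l j] by linarith

lemma blk_at:
  assumes a: "a < kk j"
  shows "blk_idx p (off j + a) = j" "blk_loc p (off j + a) = a"
proof -
  have "(LEAST l. off j + a < off (Suc l)) = j"
  proof (rule Least_equality)
    show "off j + a < off (Suc j)" using a off_Suc by simp
    show "j \<le> l" if "off j + a < off (Suc l)" for l
      using that off_Suc_le[of l j] by (meson leI less_le_not_le trans_le_add1)
  qed
  thus "blk_idx p (off j + a) = j" by (simp add: blk_idx_def)
  thus "blk_loc p (off j + a) = a" by (simp add: blk_loc_def)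
qed

lemma blk_of:
  obtains j a where "a < kk j" "n = off j + a"
proof -
  define j where "j = (LEAST j. n < off (Suc j))"
  have "n < off (Suc n)" using off_ge[of "Suc n"] by simp
  then have upper: "n < off (Suc j)" unfolding j_def by (rule LeastI)
  have lower: "off j \<le> n"
  proof (cases j)
    case (Suc i)
    have "\<not> n < off (Suc i)" using Suc unfolding j_def by (intro not_less_Least) simp
    thus ?thesis using Suc by simp
  qed simp
  show ?thesis using that[of "n - off j" j] upper lower off_Suc[of j] by simp
qed

lemma off_add_eq_iff:
  "a < kk j \<Longrightarrow> d < kk l \<Longrightarrow> off j + a = off l + d \<longleftrightarrow> j = l \<and> a = d"
  using blk_at[of a j] blk_at[of d l] by metis

lemma gjm_at:
  assumes "a < kk j" and "d < kk l"
  shows "gjm p eps b (off j + a) (off l + d) =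
    (if l = j then (if a = Suc d then 1 else 0) - (if d = kk l - 1 then coeff (p j) a else 0)
     else if l = Suc j then (if a = 0 \<and> d = kk l - 1 then eps j * eps (Suc j) * b j else 0)
     else if j = Suc l then (if a = 0 \<and> d = kk l - 1 then b l else 0)
     else 0)"
  unfolding gjm_def Let_def blk_at[OF assms(1)] blk_at[OF assms(2)] by simp

end

text \<open>Periodicity enters only through these uniform bounds, which make \<open>H\<close> a bounded band
  matrix.\<close>

locale gj_bounded = gj_matrix +
  fixes K :: nat and Cb bb :: real
  assumes deg_le: "\<And>j. kk j \<le> K"
    and coeff_bound: "\<And>j a. \<bar>coeff (p j) a\<bar> \<le> Cb"
    and b_le: "\<And>j. b j \<le> bb"
begin

definition WW :: nat where "WW = 2 * K"
definition BB :: real where "BB = 1 + Cb + bb"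

lemma BB_nonneg: "BB \<ge> 0"
  using coeff_bound[of 0 0] b_le[of 0] b_pos[of 0] by (simp add: BB_def)

lemma gjm_band:
  assumes "r + WW < c \<or> c + WW < r"
  shows "gjm p eps b r c = 0"
proof -
  obtain j a where a: "a < kk j" "r = off j + a" by (rule blk_of)
  obtain l d where d: "d < kk l" "c = off l + d" by (rule blk_of)
  have "kk j \<le> K" "kk l \<le> K" using deg_le by auto
  then have "\<not> (l = j \<or> l = Suc j \<or> j = Suc l)"
    using assms a d off_Suc[of j] off_Suc[of l] unfolding WW_def by auto
  then show ?thesis unfolding a d gjm_at[OF a(1) d(1)] by auto
qed

lemma gjm_bound: "\<bar>gjm p eps b r c\<bar> \<le> BB"
proof -
  obtain j a where a: "a < kk j" "r = off j + a" by (rule blk_of)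
  obtain l d where d: "d < kk l" "c = off l + d" by (rule blk_of)
  have "\<bar>(if a = Suc d then 1 else 0) - (if d = kk l - 1 then coeff (p j) a else 0)\<bar> \<le> 1 + Cb"
    using coeff_bound[of j a] coeff_bound[of 0 0] by (auto simp: abs_if split: if_splits)
  moreover have "\<bar>eps j * eps (Suc j) * b j\<bar> \<le> bb"
    using eps_cases[of j] eps_cases[of "Suc j"] b_pos[of j] b_le[of j] by auto
  moreover have "\<bar>b l\<bar> \<le> bb" using b_pos[of l] b_le[of l] by simp
  ultimately have "\<bar>gjm p eps b (off j + a) (off l + d)\<bar> \<le> BB"
    using coeff_bound[of 0 0] b_le[of 0] b_pos[of 0] unfolding gjm_at[OF a(1) d(1)] BB_def
    by (intro abs_if_le) linarith+
  then show ?thesis using a d by simp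
qed

definition T :: "nat \<Rightarrow> nat \<Rightarrow> nat \<Rightarrow> real" where
  "T j r c = (if off j \<le> r \<and> off j \<le> c then gjm p eps b r c else 0)"

lemma T_0: "T 0 = gjm p eps b" by (simp add: T_def fun_eq_iff)

lemma banded_T: "banded (T j) WW BB"
  by unfold_locales (auto simp: T_def gjm_band gjm_bound BB_nonneg)

lemma T_at:
  assumes a: "a < kk j" and d: "d < kk l"
  shows "T j (off j + a) (off l + d) =
    (if l = j then (if a = Suc d then 1 else 0) - (if d = kk j - 1 then coeff (p j) a else 0)
     else if l = Suc j then (if a = 0 \<and> d = kk l - 1 then eps j * eps (Suc j) * b j else 0)
     else 0)"
proof (cases "j \<le> l")
  case True
  then show ?thesis using off_mono[OF True] gjm_at[OF a d] by (auto simp: T_def)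
next
  case False
  then show ?thesis using below_block[OF d, of j] by (simp add: T_def)
qed

lemma T_row:
  assumes a: "a < kk j"
  shows "T j (off j + a) c =
     (if c = off j + a - 1 then (if a = 0 then 0 else 1) else 0)
   + (if c = off j + kk j - 1 then - coeff (p j) a else 0)
   + (if c = off (Suc j) + kk (Suc j) - 1 then (if a = 0 then eps j * eps (Suc j) * b j else 0) else 0)"
proof -
  obtain l d where d: "d < kk l" "c = off l + d" by (rule blk_of)
  have k: "kk j - 1 < kk j" "kk (Suc j) - 1 < kk (Suc j)"
    using deg_pos[of j] deg_pos[of "Suc j"] by auto
  have "off l + d = off j + a - 1 \<longleftrightarrow> l = j \<and> a = Suc d" if "a \<noteq> 0"
    using off_add_eq_iff[OF _ d(1), of "a - 1" j] that a by auto
  moreover have "off l + d = off j + kk j - 1 \<longleftrightarrow> l = j \<and> d = kk j - 1"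
    using off_add_eq_iff[OF k(1) d(1)] deg_pos[of j] by auto
  moreover have "off l + d = off (Suc j) + kk (Suc j) - 1 \<longleftrightarrow> l = Suc j \<and> d = kk (Suc j) - 1"
    using off_add_eq_iff[OF k(2) d(1)] deg_pos[of "Suc j"] by auto
  ultimately show ?thesis
    unfolding d(2) T_at[OF a d(1)] by (cases "a = 0") simp_all
qed

lemma T_split:
  assumes r: "r \<ge> off (Suc j)"
  shows "T j r c = T (Suc j) r c + (if r = off (Suc j) \<and> c = off (Suc j) - 1 then b j else 0)"
proof -
  obtain l a where a: "a < kk l" "r = off l + a" by (rule blk_of)
  obtain m d where d: "d < kk m" "c = off m + d" by (rule blk_of)
  have "Suc j \<le> l" using below_block[OF a(1), of "Suc j"] a r by (meson leI not_less)
  have r_eq: "r = off (Suc j) \<longleftrightarrow> l = Suc j \<and> a = 0"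
    using off_add_eq_iff[OF a(1), of 0 "Suc j"] deg_pos[of "Suc j"] a by auto
  have c_eq: "c = off (Suc j) - 1 \<longleftrightarrow> m = j \<and> d = kk j - 1"
    using off_add_eq_iff[OF d(1), of "kk j - 1" j] deg_pos[of j] off_Suc[of j] d by auto
  have "off j \<le> r" using off_mono[of j "Suc j"] r by simp
  consider "m < j" | "m = j" | "Suc j \<le> m" by linarith
  then show ?thesis
  proof cases
    case 1
    then show ?thesis using below_block[OF d(1) 1] below_block[OF d(1), of "Suc j"] d(2) c_eq
      by (simp add: T_def)
  next
    case 2
    have "T j r c = gjm p eps b r c" using \<open>off j \<le> r\<close> d 2 by (simp add: T_def)
    moreover have "T (Suc j) r c = 0" using below_block[OF d(1), of "Suc j"] d 2 by (simp add: T_def)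
    ultimately show ?thesis using gjm_at[OF a(1) d(1)] a(2) d(2) 2 \<open>Suc j \<le> l\<close> r_eq c_eq by auto
  next
    case 3
    then show ?thesis using off_mono[OF 3] off_mono[of j "Suc j"] r d c_eq by (auto simp: T_def)
  qed
qed

end

section \<open>The symmetrizator\<close>

lemma unit_lower_triangular_solvable:
  fixes L :: "nat \<Rightarrow> nat \<Rightarrow> real"
  shows "\<exists>f. \<forall>j<n. f j + (\<Sum>c<j. L j c * f c) = \<delta> j"
proof (induction n)
  case (Suc n)
  then obtain f where f: "\<forall>j<n. f j + (\<Sum>c<j. L j c * f c) = \<delta> j" by blast
  define g where "g = f(n := \<delta> n - (\<Sum>c<n. L n c * f c))"
  have "(\<Sum>c<j. L j c * g c) = (\<Sum>c<j. L j c * f c)" if "j \<le> n" for j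
    using that by (intro sum.cong) (auto simp: g_def)
  then have "\<forall>j<Suc n. g j + (\<Sum>c<j. L j c * g c) = \<delta> j"
    using f by (auto simp: g_def less_Suc_eq)
  then show ?case by blast
qed simp

text \<open>The symmetrizator is a Hankel matrix that is unit upper anti-triangular, so
  \<open>E\<^sub>q f = \<delta>\<close> becomes a unit lower triangular system after reversing the rows.\<close>

lemma symm_solvable:
  assumes monic: "lead_coeff q = 1"
  shows "\<exists>f. \<forall>a<degree q. (\<Sum>c<degree q. symm q a c * f c) = \<delta> a"
proof -
  define k where "k = degree q"
  obtain f where f: "\<forall>j<k. f j + (\<Sum>c<j. coeff q (k - j + c) * f c) = \<delta> (k - 1 - j)"
    using unit_lower_triangular_solvable[of k "\<lambda>j c. coeff q (k - j + c)" "\<lambda>j. \<delta> (k - 1 - j)"]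
    by blast
  have "(\<Sum>c<k. symm q a c * f c) = \<delta> a" if a: "a < k" for a
  proof -
    define j where "j = k - 1 - a"
    have j: "j < k" "a + j + 1 = k" using a by (auto simp: j_def)
    have "(\<Sum>c<k. symm q a c * f c) = (\<Sum>c<Suc j. symm q a c * f c)"
    proof (rule sum.mono_neutral_right)
      show "\<forall>i\<in>{..<k} - {..<Suc j}. symm q a i * f i = 0"
      proof
        fix i assume "i \<in> {..<k} - {..<Suc j}"
        then have "degree q < a + i + 1" using j by (auto simp: k_def)
        then show "symm q a i * f i = 0" by (simp add: symm_def coeff_eq_0)
      qed
    qed (use j in auto)
    also have "\<dots> = symm q a j * f j + (\<Sum>c<j. symm q a c * f c)" by simp
    also have "symm q a j = 1" using j monic by (simp add: symm_def k_def)
    also have "(\<Sum>c<j. symm q a c * f c) = (\<Sum>c<j. coeff q (k - j + c) * f c)"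
    proof (intro sum.cong refl)
      fix c
      have "a + c + 1 = k - j + c" using j by simp
      then show "symm q a c * f c = coeff q (k - j + c) * f c" unfolding symm_def by (simp only:)
    qed
    also have "1 * f j + \<dots> = \<delta> (k - 1 - j)" using f j(1) by simp
    also have "k - 1 - j = a" using j by simp
    finally show ?thesis .
  qed
  then show ?thesis unfolding k_def by blast
qed

lemma symm_inv_row0:
  assumes monic: "lead_coeff q = 1" and d: "d < degree q"
  shows "symm_inv q 0 d = (if d = degree q - 1 then 1 else 0)"
proof -
  define k where "k = degree q"
  have "\<forall>d. \<exists>f. \<forall>a<k. (\<Sum>c<k. symm q a c * f c) = (if a = d then 1 else 0)"
    using symm_solvable[OF monic, of "\<lambda>a. if a = _ then 1 else 0"] unfolding k_def by blast
  then obtain f where "\<forall>d. \<forall>a<k. (\<Sum>c<k. symm q a c * f d c) = (if a = d then 1 else 0)"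
    by metis
  then have "\<exists>F. \<forall>a<k. \<forall>d<k. (\<Sum>c<k. symm q a c * F c d) = (if a = d then 1 else 0)"
    by (intro exI[of _ "\<lambda>c d. f d c"]) blast
  then have inverse: "\<forall>a<k. \<forall>d<k. (\<Sum>c<k. symm q a c * symm_inv q c d) = (if a = d then 1 else 0)"
    unfolding symm_inv_def k_def[symmetric] by (rule someI_ex)
  have k: "k - 1 < k" using d by (simp add: k_def)
  have "(\<Sum>c<k. symm q (k - 1) c * symm_inv q c d) = (\<Sum>c\<in>{0}. symm q (k - 1) c * symm_inv q c d)"
  proof (rule sum.mono_neutral_right)
    show "\<forall>i\<in>{..<k} - {0}. symm q (k - 1) i * symm_inv q i d = 0"
    proof
      fix i assume "i \<in> {..<k} - {0}"
      then have "degree q < k - 1 + i + 1" by (auto simp: k_def)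
      then show "symm q (k - 1) i * symm_inv q i d = 0" by (simp add: symm_def coeff_eq_0)
    qed
  qed (use k in auto)
  also have "\<dots> = symm_inv q 0 d" using monic k by (simp add: symm_def k_def)
  finally show ?thesis using inverse k d by (auto simp: k_def)
qed

section \<open>The continued fraction of a generalized Jacobi matrix\<close>

lemma poly_monic_split:
  fixes q :: "real poly"
  assumes "lead_coeff q = 1" and "degree q \<ge> 1"
  shows "poly (map_poly complex_of_real q) z =
    (\<Sum>i\<le>degree q - 1. of_real (coeff q i) * z ^ i) + z ^ degree q"
proof -
  have "poly (map_poly complex_of_real q) z = (\<Sum>i\<le>degree q. of_real (coeff q i) * z ^ i)"
    by (simp add: poly_altdef degree_map_poly coeff_map_poly)
  also have "{..degree q} = insert (degree q) {..degree q - 1}" using assms(2) by auto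
  finally show ?thesis using assms by (simp add: add.commute)
qed

context gj_bounded
begin

definition RR :: real where "RR = banded.radius WW BB"

text \<open>\<open>X j z = (T j - z)\<inverse> e\<^bsub>off j\<^esub>\<close>; its last entry in block \<open>j\<close> is \<open>mu j z\<close>, so that
  \<open>mu 0\<close> is (up to the sign \<open>eps 0\<close>) the \<open>m\<close>-function and \<open>mu j\<close> that of the \<open>j\<close>-th tail.\<close>

definition X :: "nat \<Rightarrow> complex \<Rightarrow> nat \<Rightarrow> complex" where
  "X j z = banded.neumann_col (T j) (off j) z"

definition mu :: "nat \<Rightarrow> complex \<Rightarrow> complex" where
  "mu j z = X j z (off (Suc j) - 1)"

lemma RR_pos: "RR > 0"
  unfolding RR_def by (rule banded.radius_pos[OF banded_T])

lemma X_solves: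
  "cmod z \<ge> RR \<Longrightarrow> mat_app (T j) (X j z) r - z * X j z r = (if r = off j then 1 else 0)"
  unfolding X_def RR_def by (rule banded.neumann_col_solves[OF banded_T])

lemma X_bound: "cmod z \<ge> RR \<Longrightarrow> cmod (X j z r) \<le> 2 / cmod z"
  unfolding X_def RR_def by (rule banded.neumann_col_bound[OF banded_T])

lemma mu_bound: "cmod z \<ge> RR \<Longrightarrow> cmod (mu j z) \<le> 2 / cmod z"
  unfolding mu_def by (rule X_bound)

lemma T_bounded_solution_unique:
  assumes z: "cmod z \<ge> RR" and "\<And>r. cmod (y r) \<le> S" and "\<And>r. cmod (y' r) \<le> S'"
    and "\<And>r. mat_app (T j) y r - z * y r = f r" and "\<And>r. mat_app (T j) y' r - z * y' r = f r"
  shows "y = y'"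
proof (rule banded.bounded_solution_unique[OF banded_T _ assms(2-5)])
  show "cmod z > banded.M WW BB"
    using z banded.radius_ge[OF banded_T] banded.M_ge_1[OF banded_T] unfolding RR_def by linarith
qed

lemma mat_app_T_below: "r < off j \<Longrightarrow> mat_app (T j) x r = 0"
  by (simp add: mat_app_def T_def)

lemma mat_app_T_restrict: "mat_app (T j) (\<lambda>c. if off j \<le> c then x c else 0) r = mat_app (T j) x r"
  unfolding mat_app_def by (rule arg_cong[where f = suminf]) (auto simp: T_def)

lemma mat_app_T_split:
  assumes r: "r \<ge> off (Suc j)"
  shows "mat_app (T j) x r = mat_app (T (Suc j)) x r
    + (if r = off (Suc j) then of_real (b j) * x (off (Suc j) - 1) else 0)"
proof -
  let ?v = "if r = off (Suc j) then of_real (b j) * x (off (Suc j) - 1) else 0"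
  have "(\<lambda>c. complex_of_real (T j r c) * x c)
      = (\<lambda>c. complex_of_real (T (Suc j) r c) * x c + (if c = off (Suc j) - 1 then ?v else 0))"
    using T_split[OF r] by (auto simp: fun_eq_iff distrib_right)
  moreover have "(\<lambda>c. complex_of_real (T (Suc j) r c) * x c) sums mat_app (T (Suc j)) x r"
    unfolding mat_app_def by (rule summable_sums[OF banded.summable_row[OF banded_T]])
  moreover have "(\<lambda>c. if c = off (Suc j) - 1 then ?v else 0) sums ?v"
    by (rule sums_single)
  ultimately have "(\<lambda>c. complex_of_real (T j r c) * x c) sums (mat_app (T (Suc j)) x r + ?v)"
    by (simp add: sums_add)
  then show ?thesis unfolding mat_app_def by (rule sums_unique[symmetric])
qed

text \<open>Beyond block \<open>j\<close>, \<open>X j z\<close> solves the equation of the next tail with right-hand side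
  \<open>-b\<^sub>j mu j z e\<^bsub>off (Suc j)\<^esub>\<close>, so by uniqueness it is a multiple of \<open>X (Suc j) z\<close>.\<close>

lemma X_junction:
  assumes z: "cmod z \<ge> RR" and r: "r \<ge> off (Suc j)"
  shows "X j z r = (- of_real (b j) * mu j z) * X (Suc j) z r"
proof -
  define s where "s = - of_real (b j) * mu j z"
  define w where "w = (\<lambda>r. if off (Suc j) \<le> r then X j z r else 0)"
  have w_solves: "mat_app (T (Suc j)) w r - z * w r = s * (if r = off (Suc j) then 1 else 0)" for r
  proof (cases "off (Suc j) \<le> r")
    case True
    have "r \<noteq> off j" using True off_Suc[of j] deg_pos[of j] by linarith
    then have "mat_app (T j) (X j z) r - z * X j z r = 0" using X_solves[OF z, of j r] by simp
    then show ?thesis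
      using True mat_app_T_split[OF True, of "X j z"] mat_app_T_restrict[of "Suc j" "X j z" r]
      by (auto simp: w_def s_def mu_def algebra_simps)
  qed (simp add: w_def mat_app_T_below)
  have scaled_solves: "mat_app (T (Suc j)) (\<lambda>r. s * X (Suc j) z r) r - z * (s * X (Suc j) z r)
      = s * (if r = off (Suc j) then 1 else 0)" for r
    using X_solves[OF z, of "Suc j" r] banded.mat_app_scale[OF banded_T, of "Suc j" s "X (Suc j) z" r]
    by (simp add: algebra_simps)
  have "w = (\<lambda>r. s * X (Suc j) z r)"
  proof (rule T_bounded_solution_unique[OF z])
    show "cmod (w r) \<le> 2 / cmod z" for r using X_bound[OF z] RR_pos z by (simp add: w_def)
    show "cmod (s * X (Suc j) z r) \<le> cmod s * (2 / cmod z)" for r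
      unfolding norm_mult by (rule mult_left_mono[OF X_bound[OF z]]) simp
  qed (rule w_solves, rule scaled_solves)
  then have "w r = s * X (Suc j) z r" by simp
  then show ?thesis using r by (simp add: w_def s_def)
qed

lemma X_row:
  assumes z: "cmod z \<ge> RR" and a: "a < kk j"
  shows "(if a = 0 then 0 else X j z (off j + a - 1)) - of_real (coeff (p j) a) * mu j z
     + (if a = 0 then of_real (eps j * eps (Suc j) * b j) * mu (Suc j) z * (- of_real (b j) * mu j z) else 0)
     - z * X j z (off j + a) = (if a = 0 then 1 else 0)"
proof -
  have mu_X: "X j z (off j + kk j - 1) = mu j z" by (simp add: mu_def off_Suc)
  have "X j z (off (Suc j) + kk (Suc j) - 1) = (- of_real (b j) * mu j z) * mu (Suc j) z"
    using X_junction[OF z, where j = j and r = "off (Suc j) + kk (Suc j) - 1"] deg_pos[of "Suc j"]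
    by (simp add: mu_def off_Suc[of "Suc j"])
  moreover have "mat_app (T j) (X j z) (off j + a) =
     of_real (if a = 0 then 0 else 1) * X j z (off j + a - 1)
     + of_real (- coeff (p j) a) * X j z (off j + kk j - 1)
     + of_real (if a = 0 then eps j * eps (Suc j) * b j else 0) * X j z (off (Suc j) + kk (Suc j) - 1)"
    by (rule mat_app_sparse_row) (rule T_row[OF a])
  ultimately show ?thesis
    using X_solves[OF z, of j "off j + a"] unfolding mu_X by (cases "a = 0") (simp_all add: ac_simps)
qed

text \<open>Solving the rows of block \<open>j\<close> from the top expresses every entry through the last one,
  \<open>mu j z\<close>; the characteristic polynomial of the companion block \<open>C\<^bsub>p j\<^esub>\<close> appears.\<close>

lemma X_row_telescope:
  assumes z: "cmod z \<ge> RR" and m: "m < kk j"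
  shows "1 = - of_real (eps j * eps (Suc j) * (b j)\<^sup>2) * mu j z * mu (Suc j) z
     - (\<Sum>i\<le>m. of_real (coeff (p j) i) * z ^ i) * mu j z - z ^ Suc m * X j z (off j + m)"
  using m
proof (induction m)
  case 0
  show ?case using X_row[OF z 0] by (simp add: power2_eq_square) algebra
next
  case (Suc m)
  have "1 = - of_real (eps j * eps (Suc j) * (b j)\<^sup>2) * mu j z * mu (Suc j) z
     - (\<Sum>i\<le>m. of_real (coeff (p j) i) * z ^ i) * mu j z - z ^ Suc m * X j z (off j + m)"
    using Suc by simp
  also have "X j z (off j + m) = of_real (coeff (p j) (Suc m)) * mu j z + z * X j z (off j + Suc m)"
    using X_row[OF z Suc.prems] by (simp add: algebra_simps)
  finally show ?case by (simp add: algebra_simps)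
qed

lemma mu_recursion:
  assumes z: "cmod z \<ge> RR"
  shows "1 = - mu j z * (poly (map_poly of_real (p j)) z
            + of_real (eps j * eps (Suc j) * (b j)\<^sup>2) * mu (Suc j) z)"
proof -
  have k: "kk j - 1 < kk j" "Suc (kk j - 1) = kk j" using deg_pos[of j] by auto
  have "X j z (off j + (kk j - 1)) = mu j z" using k by (simp add: mu_def off_Suc)
  then have "1 = - of_real (eps j * eps (Suc j) * (b j)\<^sup>2) * mu j z * mu (Suc j) z
     - (\<Sum>i\<le>kk j - 1. of_real (coeff (p j) i) * z ^ i) * mu j z - z ^ kk j * mu j z"
    using X_row_telescope[OF z k(1)] k(2) by simp
  also have "\<dots> = - mu j z * ((\<Sum>i\<le>kk j - 1. of_real (coeff (p j) i) * z ^ i) + z ^ kk j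
      + of_real (eps j * eps (Suc j) * (b j)\<^sup>2) * mu (Suc j) z)"
    by (simp add: algebra_simps)
  finally show ?thesis unfolding poly_monic_split[OF monic deg_pos] .
qed

end

context gj_bounded
begin

lemma resolvent_e_eq_X0:
  assumes z: "cmod z \<ge> RR"
  shows "resolvent_e (gjm p eps b) z = X 0 z"
  unfolding resolvent_e_def
proof (rule the_equality)
  have "l2 (X 0 z)"
    using z unfolding X_def RR_def off_0 by (rule banded.neumann_col_l2[OF banded_T])
  then show "l2 (X 0 z) \<and> (\<forall>r. mat_app (gjm p eps b) (X 0 z) r - z * X 0 z r = e0 r)"
    using X_solves[OF z, of 0] by (simp add: T_0 e0_def)
next
  fix x assume x: "l2 x \<and> (\<forall>r. mat_app (gjm p eps b) x r - z * x r = e0 r)"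
  show "x = X 0 z"
  proof (rule T_bounded_solution_unique[OF z])
    show "cmod (x r) \<le> sqrt (\<Sum>n. (cmod (x n))\<^sup>2)" for r using x l2_norm_le by blast
    show "cmod (X 0 z r) \<le> 2 / cmod z" for r using X_bound[OF z] .
    show "mat_app (T 0) x r - z * x r = e0 r" for r using x by (simp add: T_0)
    show "mat_app (T 0) (X 0 z) r - z * X 0 z r = e0 r" for r
      using X_solves[OF z, of 0 r] by (simp add: e0_def)
  qed
qed

lemma Gmat_row0: "Gmat p eps 0 c = (if c = kk 0 - 1 then eps 0 else 0)"
proof -
  obtain l d where d: "d < kk l" "c = off l + d" by (rule blk_of)
  have blk0: "blk_idx p 0 = 0" "blk_loc p 0 = 0"
    using blk_at[of 0 0] deg_pos[of 0] by auto
  show ?thesis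
  proof (cases "l = 0")
    case True
    then show ?thesis
      using d symm_inv_row0[OF monic, of d 0] blk_at[OF d(1)] by (simp add: Gmat_def blk0)
  next
    case False
    then have "kk 0 \<le> c" using off_Suc_le[of 0 l] off_Suc[of 0] d by simp
    then show ?thesis using d False deg_pos[of 0] blk_at[OF d(1)] by (simp add: Gmat_def blk0)
  qed
qed

lemma mfun_eq_mu0:
  assumes z: "cmod z \<ge> RR"
  shows "mfun p eps b z = of_real (eps 0) * mu 0 z"
proof -
  have "mfun p eps b z = (\<Sum>n\<in>{0}. mat_app (Gmat p eps) (X 0 z) n * cnj (e0 n))"
    unfolding mfun_def indef_ip_def resolvent_e_eq_X0[OF z] by (rule suminf_finite) (auto simp: e0_def)
  also have "\<dots> = mat_app (Gmat p eps) (X 0 z) 0" by (simp add: e0_def)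
  also have "\<dots> = of_real (eps 0) * X 0 z (kk 0 - 1) + of_real 0 * X 0 z 0 + of_real 0 * X 0 z 0"
    by (rule mat_app_sparse_row) (simp add: Gmat_row0)
  finally show ?thesis by (simp add: mu_def off_Suc)
qed

end

section \<open>Uniqueness\<close>

lemma sign_mult_square_eq_iff:
  fixes e e' x x' :: real
  assumes "\<bar>e\<bar> = 1" "\<bar>e'\<bar> = 1" "x > 0" "x' > 0"
  shows "e * x\<^sup>2 = e' * x'\<^sup>2 \<longleftrightarrow> e = e' \<and> x = x'"
proof
  assume eq: "e * x\<^sup>2 = e' * x'\<^sup>2"
  then have "\<bar>e\<bar> * x\<^sup>2 = \<bar>e'\<bar> * x'\<^sup>2" by (metis abs_mult abs_power2)
  then have "x = x'" using assms by (simp add: power2_eq_iff_nonneg)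
  then show "e = e' \<and> x = x'" using eq assms(3) by simp
qed simp

lemma gjm_cong:
  assumes "p = p'" "b = b'" "\<And>j. eps j * eps (Suc j) = eps' j * eps' (Suc j)"
  shows "gjm p eps b = gjm p' eps' b'"
  unfolding assms(1,2) gjm_def Let_def assms(3) ..

locale gj_bounded_pair =
  g: gj_bounded p eps b K Cb bb + g': gj_bounded p' eps' b' K' Cb' bb'
  for p eps b K Cb bb p' eps' b' K' Cb' bb'
begin

lemma cfrac_pair:
  "cfrac_pair p p' (\<lambda>j. eps j * eps (Suc j) * (b j)\<^sup>2) (\<lambda>j. eps' j * eps' (Suc j) * (b' j)\<^sup>2)
     g.mu g'.mu (max g.RR g'.RR)"
proof
  fix j z
  show "eps j * eps (Suc j) * (b j)\<^sup>2 \<noteq> 0"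
    using g.eps_cases[of j] g.eps_cases[of "Suc j"] g.b_pos[of j] by auto
  show "eps' j * eps' (Suc j) * (b' j)\<^sup>2 \<noteq> 0"
    using g'.eps_cases[of j] g'.eps_cases[of "Suc j"] g'.b_pos[of j] by auto
  assume "max g.RR g'.RR \<le> cmod z"
  then have z: "g.RR \<le> cmod z" "g'.RR \<le> cmod z" by auto
  show "1 = - g.mu j z * (poly (map_poly of_real (p j)) z
      + of_real (eps j * eps (Suc j) * (b j)\<^sup>2) * g.mu (Suc j) z)"
    using z(1) by (rule g.mu_recursion)
  show "1 = - g'.mu j z * (poly (map_poly of_real (p' j)) z
      + of_real (eps' j * eps' (Suc j) * (b' j)\<^sup>2) * g'.mu (Suc j) z)"
    using z(2) by (rule g'.mu_recursion)
  show "cmod (g.mu j z) \<le> 2 / cmod z" using z(1) by (rule g.mu_bound)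
  show "cmod (g'.mu j z) \<le> 2 / cmod z" using z(2) by (rule g'.mu_bound)
qed (use g.monic g'.monic in auto)

theorem gjm_eq_if_mfun_eq:
  assumes mfun_eq: "\<And>z. cmod z > R \<Longrightarrow> mfun p eps b z = mfun p' eps' b' z"
  shows "gjm p eps b = gjm p' eps' b'"
proof -
  interpret cfrac_pair p p' "\<lambda>j. eps j * eps (Suc j) * (b j)\<^sup>2" "\<lambda>j. eps' j * eps' (Suc j) * (b' j)\<^sup>2"
    g.mu g'.mu "max g.RR g'.RR"
    by (rule cfrac_pair)
  have eps0: "eps' 0 \<noteq> 0" "complex_of_real (eps 0 / eps' 0) \<noteq> 0"
    using g.eps_cases[of 0] g'.eps_cases[of 0] by auto
  have "g'.mu 0 z = of_real (eps 0 / eps' 0) * g.mu 0 z" if "cmod z \<ge> max (R + 1) (max g.RR g'.RR)" for z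
    using that mfun_eq[of z] g.mfun_eq_mu0[of z] g'.mfun_eq_mu0[of z] eps0(1) by (simp add: field_simps)
  note coeffs = coeffs_eq_if_scaled[of _ "max (R + 1) (max g.RR g'.RR)", OF eps0(2) this]
  have "eps j * eps (Suc j) = eps' j * eps' (Suc j) \<and> b j = b' j" for j
    using coeffs(2)[of j] g.b_pos[of j] g'.b_pos[of j]
      sign_mult_square_eq_iff[of "eps j * eps (Suc j)" "eps' j * eps' (Suc j)" "b j" "b' j"]
    by (simp add: abs_mult g.abs_eps g'.abs_eps)
  then show ?thesis using coeffs(1) by (intro gjm_cong) auto
qed

end

section \<open>Periodic matrices\<close>

lemma finite_range_if_periodic:
  fixes f :: "nat \<Rightarrow> 'a"
  assumes "s > 0" and periodic: "\<And>j. f (j + s) = f j"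
  shows "finite (range f)"
proof -
  have mod: "f j = f (j mod s)" for j
  proof (induction j rule: less_induct)
    case (less j)
    show ?case
    proof (cases "j < s")
      case False
      then have "f j = f (j - s)" using periodic[of "j - s"] by simp
      then show ?thesis using less[of "j - s"] assms(1) False by (simp add: le_mod_geq)
    qed simp
  qed
  have "f j \<in> f ` {..<s}" for j
    using mod[of j] assms(1) by (metis image_eqI lessThan_iff mod_less_divisor)
  then have "range f \<subseteq> f ` {..<s}" by blast
  then show ?thesis by (rule finite_subset) simp
qed

lemma gj_bounded_if_periodic:
  assumes data: "gj_data p eps b" and "gj_periodic p eps b"
  shows "\<exists>K Cb bb. gj_bounded p eps b K Cb bb"
proof -
  interpret gj_matrix p eps b by (rule gj_matrix.intro[OF data])
  from assms(2) obtain s where "s > 0" "\<And>j. p (j + s) = p j" "\<And>j. b (j + s) = b j"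
    unfolding gj_periodic_def by blast
  then have fin: "finite (range p)" "finite (range b)" by (auto intro: finite_range_if_periodic)
  define K where "K = Max (degree ` range p)"
  define Cb where "Cb = Max ((\<lambda>(q, a). \<bar>coeff q a\<bar>) ` (range p \<times> {..K}))"
  have deg: "degree (p j) \<le> K" for j
    unfolding K_def using fin(1) by (intro Max_ge) auto
  have coeff_le: "\<bar>coeff (p j) a\<bar> \<le> Cb" if "a \<le> K" for j a
    unfolding Cb_def using fin(1) that by (intro Max_ge) (auto intro: image_eqI[of _ _ "(p j, a)"])
  have "\<bar>coeff (p j) a\<bar> \<le> Cb" for j a
    using coeff_le[of a j] coeff_le[of 0 0] deg[of j] by (cases "a \<le> K") (auto simp: coeff_eq_0)
  moreover have "b j \<le> Max (range b)" for j using fin(2) by simp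
  ultimately have "gj_bounded p eps b K Cb (Max (range b))"
    using deg by unfold_locales auto
  then show ?thesis by blast
qed

theorem theorem2p10:
  fixes p p' :: "nat \<Rightarrow> real poly" and eps eps' b b' :: "nat \<Rightarrow> real"
  assumes "gj_data p eps b" and "gj_periodic p eps b"
    and "gj_data p' eps' b'" and "gj_periodic p' eps' b'"
    and "\<exists>R. \<forall>z. cmod z > R \<longrightarrow> mfun p eps b z = mfun p' eps' b' z"
  shows "gjm p eps b = gjm p' eps' b'"
proof -
  obtain K Cb bb K' Cb' bb' where
    "gj_bounded p eps b K Cb bb" "gj_bounded p' eps' b' K' Cb' bb'"
    using gj_bounded_if_periodic assms(1-4) by metis
  then interpret gj_bounded_pair p eps b K Cb bb p' eps' b' K' Cb' bb'
    by (intro gj_bounded_pair.intro)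
  from assms(5) obtain R where "\<And>z. cmod z > R \<Longrightarrow> mfun p eps b z = mfun p' eps' b' z"
    by blast
  then show ?thesis by (rule gjm_eq_if_mfun_eq)
qed

end
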